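(* Consider a run of the algorithm described in the context, and assume the event $\mathcal E$ occurs. Then for every iteration $j$ of the run, $\mathcal G_j^*:=\mathcal G^*\cap\mathcal G_j\neq\emptyset$, where $\mathcal G^*=\{G\in\mathcal G_{d,k}:\mathcal S(G)=\mathcal S^*\}$.
   Context: Setting. $\mathbf{X}=(X_1,\dots,X_d)$ is a random vector; $k$ a fixed positive integer; natural logarithms. A family is $f=\langle X_i,\Pi\rangle$ with $\Pi\subseteq\{X_1,\dots,X_d\}\setminus\{X_i\}$, $|\Pi|\le k$; $\mathcal F_{d,k}$ the set of families; $H(f)=H(X_i\mid\Pi)$. $\mathcal G_{d,k}$ = DAGs over the variables with in-degree $\le k$, identified with their family sets; $\mathcal S(F)=-\sum_{f\in F}H(f)$; $\mathcal S^*=\max_{G\in\mathcal G_{d,k}}\mathcal S(G)$. $\mathcal E_{d,k}$ is the set of Markov equivalence classes (ECs) on $\mathcal G_{d,k}$ (graphs with identical conditional independence constraints); graphs in an EC share a score. Each sample is an independent copy of $\mathbf X$ of which only a chosen set of $k+1$ coordinates is revealed. $\hat H$ is an estimator of $H(f)$ from the samples where all variables of $f$ were observed, and $N(\epsilon,\delta)$ is such that for any fixed $f$, at least $N(\epsilon,\delta)$ such samples give $|\hat H(f)-H(f)|\le\epsilon$ with probability $\ge1-\delta$. Notation: $\mathcal F_{\mathrm{act}}(\mathcal V)$ = families whose child is not in $\mathcal V\subseteq[d]$; $\mathcal G_j=\{G\in\mathcal G_{d,k}:\mathcal A_j\subseteq G\}$; $E^{(j)}=E\cap\mathcal G_j$;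 $U(\mathcal A)=\bigcup_{G\in\mathcal A}G$; $\hat H_t(f)$ = estimate from all samples up to round $t$; $\hat{\mathcal S}_t(G)=-\sum_{f\in G}\hat H_t(f)$; $\hat{\mathcal S}_t(\mathcal A)=\max_{G\in\mathcal A}\hat{\mathcal S}_t(G)$. Algorithm (inputs $d,k,\delta\in(0,1),\epsilon,\epsilon_1>0$). Initialize $\mathcal A_1=\emptyset,\mathcal V=\emptyset,N_0=0,t=1,j=1,T=\lceil\log_2(2d\epsilon_1/\epsilon)\rceil$. While $\epsilon_t>\epsilon/(d-|\mathcal V|)$ (a "round" $t$): $N_t=N(\epsilon_t/2,\delta/(T|\mathcal F_{\mathrm{act}}(\mathcal V)|))$; observe each $(k+1)$-subset of $[d]$ not contained in $\mathcal V$ in $N_t-N_{t-1}$ new samples; repeat the following "iteration" until $\mathcal A_j=\mathcal A_{j-1}$: $\theta_j=(d-|\mathcal V|)\epsilon_t$; $\hat G_j\in\arg\max_{G\in\mathcal G_j}\hat{\mathcal S}_t(G)$, $\hat E_j$ its EC; $L_j=\{E\in\mathcal E_{d,k}:E^{(j)}\neq\emptyset,\hat{\mathcal S}_t(\hat E_j^{(j)})-\hat{\mathcal S}_t(E^{(j)})\le\theta_j\}$; if some $f\in U(\hat E_j^{(j)})\cap\mathcal F_{\mathrm{act}}(\mathcal V)$ satisfies $f\in U(E^{(j)})$ for all $E\in L_j$, accept one such $f=\langle X_v,\Pi\rangle$: $\mathcal V\leftarrow\mathcal V\cup\{v\}$, $\mathcal A_{j+1}=\mathcal A_j\cup\{f\}$;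 else $\mathcal A_{j+1}=\mathcal A_j$; $j\leftarrow j+1$. After the iterations, if $|\mathcal V|=d$ return $\mathcal A_j$; else $t\leftarrow t+1$, $\epsilon_t=\epsilon_{t-1}/2$. After the while loop: $\epsilon_{\mathrm{last}}=\epsilon/(d-|\mathcal V|)$, $N_T=N(\epsilon_{\mathrm{last}}/2,\delta/(T|\mathcal F_{\mathrm{act}}(\mathcal V)|))$, observe remaining subsets in $N_T-N_{T-1}$ more samples, return a maximizer of $\hat{\mathcal S}_T$ over $\mathcal G_j$. Event: with $\mathcal V_t$ the value of $\mathcal V$ at the start of round $t$, $\mathcal E:=\{\forall t\in[T],\forall f\in\mathcal F_{\mathrm{act}}(\mathcal V_t): |\hat H_t(f)-H(f)|\le\epsilon_t/2\}$. *)

theory Defs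
  imports Complex_Main
begin

text \<open>Variables are indexed by 0..<d. A family (i, P) has child i and parent set P.\<close>
type_synonym fam = "nat \<times> nat set"

definition families :: "nat \<Rightarrow> nat \<Rightarrow> fam set" where
  "families d k = {(i, P). i < d \<and> P \<subseteq> {0..<d} - {i} \<and> card P \<le> k}"

definition edges :: "fam set \<Rightarrow> (nat \<times> nat) set" where
  "edges G = {(p, i). \<exists>P. (i, P) \<in> G \<and> p \<in> P}"

definition dags :: "nat \<Rightarrow> nat \<Rightarrow> fam set set" where
  "dags d k = {G. G \<subseteq> families d k \<and> (\<forall>i<d. \<exists>!P. (i, P) \<in> G) \<and> acyclic (edges G)}"

definition adj :: "fam set \<Rightarrow> nat \<Rightarrow> nat \<Rightarrow> bool" where
  "adj G u v \<longleftrightarrow> (u, v) \<in> edges G \<or> (v, u) \<in> edges G"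

definition collider_at :: "fam set \<Rightarrow> nat list \<Rightarrow> nat \<Rightarrow> bool" where
  "collider_at G p i \<longleftrightarrow> (p ! (i - 1), p ! i) \<in> edges G \<and> (p ! Suc i, p ! i) \<in> edges G"

definition d_connecting :: "fam set \<Rightarrow> nat set \<Rightarrow> nat list \<Rightarrow> bool" where
  "d_connecting G Z p \<longleftrightarrow>
     2 \<le> length p \<and> distinct p \<and>
     (\<forall>i. Suc i < length p \<longrightarrow> adj G (p ! i) (p ! Suc i)) \<and>
     (\<forall>i. 0 < i \<and> Suc i < length p \<longrightarrow>
        (if collider_at G p i then (\<exists>w\<in>Z. (p ! i, w) \<in> (edges G)\<^sup>*) else p ! i \<notin> Z))"

definition d_separated :: "fam set \<Rightarrow> nat set \<Rightarrow> nat set \<Rightarrow> nat set \<Rightarrow> bool" where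
  "d_separated G X Y Z \<longleftrightarrow> \<not> (\<exists>p. d_connecting G Z p \<and> hd p \<in> X \<and> last p \<in> Y)"

definition markov_equiv :: "nat \<Rightarrow> fam set \<Rightarrow> fam set \<Rightarrow> bool" where
  "markov_equiv d G G' \<longleftrightarrow>
     (\<forall>X Y Z. X \<subseteq> {0..<d} \<and> Y \<subseteq> {0..<d} \<and> Z \<subseteq> {0..<d} \<and>
        X \<inter> Y = {} \<and> X \<inter> Z = {} \<and> Y \<inter> Z = {} \<longrightarrow>
        (d_separated G X Y Z \<longleftrightarrow> d_separated G' X Y Z))"

definition ec_of :: "nat \<Rightarrow> nat \<Rightarrow> fam set \<Rightarrow> fam set set" where
  "ec_of d k G = {G' \<in> dags d k. markov_equiv d G G'}"

definition ecs :: "nat \<Rightarrow> nat \<Rightarrow> fam set set set" where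
  "ecs d k = ec_of d k ` dags d k"

text \<open>Score with respect to a family function (true entropies H or estimates).\<close>
definition score :: "(fam \<Rightarrow> real) \<Rightarrow> fam set \<Rightarrow> real" where
  "score H G = - (\<Sum>f\<in>G. H f)"

definition S_star :: "nat \<Rightarrow> nat \<Rightarrow> (fam \<Rightarrow> real) \<Rightarrow> real" where
  "S_star d k H = Max (score H ` dags d k)"

definition G_star :: "nat \<Rightarrow> nat \<Rightarrow> (fam \<Rightarrow> real) \<Rightarrow> fam set set" where
  "G_star d k H = {G \<in> dags d k. score H G = S_star d k H}"

definition F_act :: "nat \<Rightarrow> nat \<Rightarrow> nat set \<Rightarrow> fam set" where
  "F_act d k V = {f \<in> families d k. fst f \<notin> V}"

definition G_j :: "nat \<Rightarrow> nat \<Rightarrow> fam set \<Rightarrow> fam set set" where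
  "G_j d k A = {G \<in> dags d k. A \<subseteq> G}"

definition score_set :: "(fam \<Rightarrow> real) \<Rightarrow> fam set set \<Rightarrow> real" where
  "score_set Hh \<A> = Max (score Hh ` \<A>)"

definition eps_round :: "real \<Rightarrow> nat \<Rightarrow> real" where
  "eps_round eps1 t = eps1 / 2 ^ (t - 1)"

definition T_rounds :: "nat \<Rightarrow> real \<Rightarrow> real \<Rightarrow> nat" where
  "T_rounds d eps eps1 = nat \<lceil>log 2 (2 * real d * eps1 / eps)\<rceil>"

definition L_set :: "nat \<Rightarrow> nat \<Rightarrow> (fam \<Rightarrow> real) \<Rightarrow> real \<Rightarrow> fam set \<Rightarrow> fam set \<Rightarrow> fam set set set" where
  "L_set d k Hh \<theta> A G0 =
     {E \<in> ecs d k. E \<inter> G_j d k A \<noteq> {} \<and>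
        score_set Hh (ec_of d k G0 \<inter> G_j d k A) - score_set Hh (E \<inter> G_j d k A) \<le> \<theta>}"

definition accept_cond :: "nat \<Rightarrow> nat \<Rightarrow> (fam \<Rightarrow> real) \<Rightarrow> real \<Rightarrow> fam set \<Rightarrow> nat set \<Rightarrow> fam set \<Rightarrow> fam \<Rightarrow> bool" where
  "accept_cond d k Hh \<theta> A V G0 f \<longleftrightarrow>
     f \<in> \<Union>(ec_of d k G0 \<inter> G_j d k A) \<and> f \<in> F_act d k V \<and>
     (\<forall>E\<in>L_set d k Hh \<theta> A G0. f \<in> \<Union>(E \<inter> G_j d k A))"

definition is_iteration :: "nat \<Rightarrow> nat \<Rightarrow> (fam \<Rightarrow> real) \<Rightarrow> real \<Rightarrow> fam set \<Rightarrow> nat set \<Rightarrow> fam set \<Rightarrow> fam set \<Rightarrow> nat set \<Rightarrow> bool" where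
  "is_iteration d k Hh \<theta> A V G0 A' V' \<longleftrightarrow>
     G0 \<in> G_j d k A \<and> (\<forall>G\<in>G_j d k A. score Hh G \<le> score Hh G0) \<and>
     ((\<exists>f. accept_cond d k Hh \<theta> A V G0 f \<and> A' = insert f A \<and> V' = insert (fst f) V) \<or>
      ((\<forall>f. \<not> accept_cond d k Hh \<theta> A V G0 f) \<and> A' = A \<and> V' = V))"

definition round_start :: "(nat \<Rightarrow> nat) \<Rightarrow> nat \<Rightarrow> bool" where
  "round_start tr j \<longleftrightarrow> j = 1 \<or> tr (j - 1) \<noteq> tr j"

end

theory Submission
  imports Defs
begin

text \<open>The invariant is that some optimal DAG contains all accepted families.
  Two DAGs containing the accepted set A differ from each other only in families whose
  children are not yet settled; there are at most d - |V| of them in each DAG and all are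
  active. On the event every active family is estimated within \<epsilon>_t/2, so the
  estimated score gap between the two DAGs exceeds the true gap by at most
  \<theta> = (d - |V|) \<epsilon>_t. Hence the equivalence class of an optimal G \<supseteq> A passes
  the test defining L_j, the accepted family lies in some member of that class, and that
  member is again optimal since the score is constant on equivalence classes. The event
  applies at every iteration: the loop guard keeps the round index below T, and within a
  round the set of active families only shrinks.\<close>

lemma finite_families: "finite (families d k)"
proof -
  have "families d k \<subseteq> {0..<d} \<times> Pow {0..<d}"
    unfolding families_def by auto
  then show ?thesis
    by (rule finite_subset) auto
qed

lemma finite_dags: "finite (dags d k)"
proof -
  have "dags d k \<subseteq> Pow (families d k)"
    unfolding dags_def by auto
  then show ?thesis
    using finite_families by (metis finite_Pow_iff finite_subset)
qed

lemma finite_dag: "G \<in> dags d k \<Longrightarrow> finite G"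
  using finite_families unfolding dags_def by (auto intro: finite_subset)

lemma dag_parents_unique:
  assumes "G \<in> dags d k" "(i, P) \<in> G" "(i, Q) \<in> G"
  shows "P = Q"
proof -
  have "i < d"
    using assms unfolding dags_def families_def by auto
  then show ?thesis
    using assms unfolding dags_def by blast
qed

lemma inj_on_fst_dag: "G \<in> dags d k \<Longrightarrow> inj_on fst G"
  by (rule inj_onI) (metis dag_parents_unique prod.collapse)

lemma dags_nonempty: "dags d k \<noteq> {}"
proof -
  let ?G = "(\<lambda>i. (i, {})) ` {0..<d} :: fam set"
  have "edges ?G = {}"
    unfolding edges_def by auto
  then have "?G \<in> dags d k"
    unfolding dags_def families_def by (auto simp: image_iff acyclic_def)
  then show ?thesis
    by auto
qed

lemma score_le_S_star: "G \<in> dags d k \<Longrightarrow> score H G \<le> S_star d k H"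
  unfolding S_star_def using finite_dags by (intro Max_ge) auto

lemma G_star_nonempty: "G_star d k H \<noteq> {}"
proof -
  have "S_star d k H \<in> score H ` dags d k"
    unfolding S_star_def using finite_dags dags_nonempty by (intro Max_in) auto
  then show ?thesis
    unfolding G_star_def by auto
qed

lemma G_j_empty: "G_j d k {} = dags d k"
  unfolding G_j_def by auto

lemma mem_ec_of_self: "G \<in> dags d k \<Longrightarrow> G \<in> ec_of d k G"
  unfolding ec_of_def markov_equiv_def by simp

lemma ec_of_subset_G_star:
  assumes score_equiv: "\<forall>G\<in>dags d k. \<forall>G'\<in>dags d k. markov_equiv d G G' \<longrightarrow> score H G = score H G'"
    and "G \<in> G_star d k H"
  shows "ec_of d k G \<subseteq> G_star d k H"
  using assms unfolding G_star_def ec_of_def by auto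

lemma score_set_eqI:
  assumes "\<A> \<subseteq> dags d k" "G \<in> \<A>" "\<forall>G'\<in>\<A>. score Hh G' \<le> score Hh G"
  shows "score_set Hh \<A> = score Hh G"
  unfolding score_set_def
  using assms finite_subset[OF _ finite_dags] by (intro Max_eqI) auto

lemma score_le_score_set:
  assumes "\<A> \<subseteq> dags d k" "G \<in> \<A>"
  shows "score Hh G \<le> score_set Hh \<A>"
  unfolding score_set_def
  using assms finite_subset[OF _ finite_dags] by (intro Max_ge) auto

lemma dag_diff_subset_F_act:
  assumes G: "G \<in> dags d k" and "A \<subseteq> G"
  shows "G - A \<subseteq> F_act d k (fst ` A)"
proof
  fix f assume f: "f \<in> G - A"
  have "fst f \<notin> fst ` A"
    using f assms inj_on_fst_dag[OF G] by (auto dest: inj_onD)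
  moreover have "f \<in> families d k"
    using f G unfolding dags_def by auto
  ultimately show "f \<in> F_act d k (fst ` A)"
    unfolding F_act_def by auto
qed

lemma card_dag_diff_le:
  assumes G: "G \<in> dags d k" and "A \<subseteq> G"
  shows "card (G - A) \<le> d - card (fst ` A)"
proof -
  have "fst ` (G - A) \<subseteq> {0..<d} - fst ` A"
    using dag_diff_subset_F_act[OF assms] unfolding F_act_def families_def by auto
  then have "card (fst ` (G - A)) \<le> card ({0..<d} - fst ` A)"
    by (intro card_mono) auto
  also have "\<dots> = d - card (fst ` A)"
    using assms finite_subset[OF assms(2) finite_dag[OF G]] unfolding dags_def families_def
    by (subst card_Diff_subset) auto
  finally show ?thesis
    using card_image[OF inj_on_subset[OF inj_on_fst_dag[OF G]]] by auto
qed

lemma estimated_score_offset: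
  assumes G: "G \<in> dags d k" and AG: "A \<subseteq> G"
    and accurate: "\<forall>f\<in>F_act d k (fst ` A). \<bar>Hh f - H f\<bar> \<le> e" and "0 \<le> e"
  shows "\<bar>score Hh G - score H G + (\<Sum>f\<in>A. Hh f - H f)\<bar> \<le> real (d - card (fst ` A)) * e"
proof -
  have "score Hh G - score H G + (\<Sum>f\<in>A. Hh f - H f) = - (\<Sum>f\<in>G - A. Hh f - H f)"
    using sum.subset_diff[OF AG finite_dag[OF G], of "\<lambda>f. Hh f - H f"]
    unfolding score_def by (simp add: sum_subtractf)
  then have "\<bar>score Hh G - score H G + (\<Sum>f\<in>A. Hh f - H f)\<bar> = \<bar>\<Sum>f\<in>G - A. Hh f - H f\<bar>"
    by simp
  also have "\<dots> \<le> (\<Sum>f\<in>G - A. \<bar>Hh f - H f\<bar>)"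
    by (rule sum_abs)
  also have "\<dots> \<le> real (card (G - A)) * e"
    using sum_bounded_above[of "G - A" "\<lambda>f. \<bar>Hh f - H f\<bar>" e]
      accurate dag_diff_subset_F_act[OF G AG] by auto
  also have "\<dots> \<le> real (d - card (fst ` A)) * e"
    using card_dag_diff_le[OF G AG] \<open>0 \<le> e\<close> by (intro mult_right_mono) auto
  finally show ?thesis .
qed

lemma estimated_score_gap_le:
  assumes "G \<in> G_j d k A" "G' \<in> G_j d k A"
    and "\<forall>f\<in>F_act d k (fst ` A). \<bar>Hh f - H f\<bar> \<le> e" and "0 \<le> e"
  shows "score Hh G' - score Hh G \<le> score H G' - score H G + 2 * real (d - card (fst ` A)) * e"
  using estimated_score_offset[of G d k A Hh H e] estimated_score_offset[of G' d k A Hh H e] assms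
  unfolding G_j_def by (simp add: abs_le_iff)

lemma optimal_class_mem_L_set:
  assumes G: "G \<in> G_star d k H \<inter> G_j d k A"
    and G0: "G0 \<in> G_j d k A" and G0_max: "\<forall>G'\<in>G_j d k A. score Hh G' \<le> score Hh G0"
    and accurate: "\<forall>f\<in>F_act d k (fst ` A). \<bar>Hh f - H f\<bar> \<le> e / 2" and "0 \<le> e"
  shows "ec_of d k G \<in> L_set d k Hh (real (d - card (fst ` A)) * e) A G0"
proof -
  have Gd: "G \<in> dags d k" and G0d: "G0 \<in> dags d k"
    using G G0 unfolding G_star_def G_j_def by auto
  have "score H G0 \<le> score H G"
    using G score_le_S_star[OF G0d] unfolding G_star_def by auto
  then have "score Hh G0 - score Hh G \<le> real (d - card (fst ` A)) * e"
    using estimated_score_gap_le[of G d k A G0 Hh H "e / 2"] G G0 accurate \<open>0 \<le> e\<close> by auto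
  moreover have "score_set Hh (ec_of d k G0 \<inter> G_j d k A) = score Hh G0"
    using G0 G0d G0_max mem_ec_of_self[OF G0d] by (intro score_set_eqI[of _ d k]) (auto simp: ec_of_def)
  moreover have "score Hh G \<le> score_set Hh (ec_of d k G \<inter> G_j d k A)"
    using G Gd mem_ec_of_self[OF Gd] by (intro score_le_score_set[of _ d k]) (auto simp: ec_of_def)
  ultimately show ?thesis
    using G Gd mem_ec_of_self[OF Gd] unfolding L_set_def ecs_def by auto
qed

lemma is_iteration_fst_image:
  "is_iteration d k Hh \<theta> A V G0 A' V' \<Longrightarrow> V = fst ` A \<Longrightarrow> V' = fst ` A'"
  unfolding is_iteration_def by auto

lemma is_iteration_mono: "is_iteration d k Hh \<theta> A V G0 A' V' \<Longrightarrow> V \<subseteq> V'"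
  unfolding is_iteration_def by auto

lemma is_iteration_keeps_optimal:
  assumes score_equiv: "\<forall>G\<in>dags d k. \<forall>G'\<in>dags d k. markov_equiv d G G' \<longrightarrow> score H G = score H G'"
    and G: "G \<in> G_star d k H \<inter> G_j d k A" and V: "V = fst ` A"
    and it: "is_iteration d k Hh (real (d - card V) * e) A V G0 A' V'"
    and accurate: "\<forall>f\<in>F_act d k V. \<bar>Hh f - H f\<bar> \<le> e / 2" and "0 \<le> e"
  shows "G_star d k H \<inter> G_j d k A' \<noteq> {}"
  using it unfolding is_iteration_def
proof (elim conjE disjE exE)
  fix f
  assume acc: "accept_cond d k Hh (real (d - card V) * e) A V G0 f" and A': "A' = insert f A"
    and "G0 \<in> G_j d k A" "\<forall>G'\<in>G_j d k A. score Hh G' \<le> score Hh G0"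
  then have "ec_of d k G \<in> L_set d k Hh (real (d - card V) * e) A G0"
    using optimal_class_mem_L_set[OF G] accurate \<open>0 \<le> e\<close> V by auto
  then obtain G' where "G' \<in> ec_of d k G \<inter> G_j d k A" "f \<in> G'"
    using acc unfolding accept_cond_def by blast
  moreover have "ec_of d k G \<subseteq> G_star d k H"
    using ec_of_subset_G_star[OF score_equiv] G by auto
  ultimately show ?thesis
    unfolding A' G_j_def by auto
qed (use G in auto)

lemma run_keeps_optimal:
  assumes score_equiv: "\<forall>G\<in>dags d k. \<forall>G'\<in>dags d k. markov_equiv d G G' \<longrightarrow> score H G = score H G'"
    and init: "A 1 = {}" "V 1 = {}"
    and iter: "\<forall>j\<in>{1..J}. is_iteration d k (Hh j) (real (d - card (V j)) * e j)
                 (A j) (V j) (Gh j) (A (Suc j)) (V (Suc j))"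
    and accurate: "\<And>j. j \<in> {1..J} \<Longrightarrow> \<forall>f\<in>F_act d k (V j). \<bar>Hh j f - H f\<bar> \<le> e j / 2"
    and e_nonneg: "\<And>j. 0 \<le> e j"
    and "j \<in> {1..J}"
  shows "G_star d k H \<inter> G_j d k (A j) \<noteq> {}"
proof -
  have "G_star d k H \<inter> G_j d k (A j) \<noteq> {} \<and> V j = fst ` A j" if "1 \<le> j" "j \<le> J" for j
    using that
  proof (induction j rule: nat_induct_at_least)
    case base
    have "G_star d k H \<inter> G_j d k {} = G_star d k H"
      unfolding G_j_empty G_star_def by auto
    then show ?case
      using init G_star_nonempty by simp
  next
    case (Suc j)
    then obtain G where G: "G \<in> G_star d k H \<inter> G_j d k (A j)" and V: "V j = fst ` A j"
      by auto
    have it: "is_iteration d k (Hh j) (real (d - card (V j)) * e j)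
        (A j) (V j) (Gh j) (A (Suc j)) (V (Suc j))"
      using iter \<open>1 \<le> j\<close> \<open>Suc j \<le> J\<close> by simp
    show ?case
      using is_iteration_keeps_optimal[OF score_equiv G V it] is_iteration_fst_image[OF it V]
        accurate e_nonneg Suc by simp
  qed
  then show ?thesis
    using \<open>j \<in> {1..J}\<close> by auto
qed

text \<open>The loop guard \<epsilon>/(d - |V|) < \<epsilon>_t together with \<epsilon>/(d - |V|) > \<epsilon>/(2d) forces
  \<epsilon>_1/2^(t-1) > \<epsilon>/(2d), i.e. t - 1 < log_2(2 d \<epsilon>_1/\<epsilon>).\<close>

lemma round_le_T_rounds:
  assumes "0 < eps" "0 < eps1" "c < d" "1 \<le> t"
    and guard: "eps / real (d - c) < eps_round eps1 t"
  shows "t \<le> T_rounds d eps eps1"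
proof (rule ccontr)
  assume "\<not> t \<le> T_rounds d eps eps1"
  then have T_le: "T_rounds d eps eps1 \<le> t - 1"
    by simp
  define x where "x = 2 * real d * eps1 / eps"
  have "0 < x"
    unfolding x_def using assms by simp
  have "x = 2 powr log 2 x"
    using \<open>0 < x\<close> by simp
  also have "\<dots> \<le> 2 powr real (T_rounds d eps eps1)"
    unfolding T_rounds_def x_def by (intro powr_mono real_nat_ceiling_ge) simp
  also have "\<dots> = 2 ^ T_rounds d eps eps1"
    by (simp add: powr_realpow)
  also have "\<dots> \<le> 2 ^ (t - 1)"
    using T_le by (intro power_increasing) auto
  finally have "eps1 / 2 ^ (t - 1) \<le> eps1 / x"
    using \<open>0 < x\<close> assms by (intro divide_left_mono) auto
  also have "\<dots> = eps / (2 * real d)"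
    unfolding x_def using assms by (simp add: field_simps)
  also have "\<dots> < eps / real (d - c)"
    using assms by (intro divide_strict_left_mono) auto
  finally show False
    using guard unfolding eps_round_def by simp
qed

lemma round_induct [consumes 1, case_names new_round same_round]:
  assumes "j \<in> {1..J}"
    and new_round: "\<And>j. j \<in> {1..J} \<Longrightarrow> round_start tr j \<Longrightarrow> P j"
    and same_round: "\<And>j. j \<in> {1..<J} \<Longrightarrow> P j \<Longrightarrow> tr (Suc j) = tr j \<Longrightarrow> P (Suc j)"
  shows "P j"
proof -
  have "1 \<le> j" "j \<le> J"
    using assms(1) by auto
  then show ?thesis
  proof (induction j rule: nat_induct_at_least)
    case base
    then show ?case
      using new_round unfolding round_start_def by simp
  next
    case (Suc j)
    then show ?case
      using new_round[of "Suc j"] same_round[of j] unfolding round_start_def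
      by (cases "tr (Suc j) = tr j") auto
  qed
qed

theorem lemma2:
  fixes d k J :: nat and eps eps1 \<delta> :: real
    and H :: "fam \<Rightarrow> real" and Hh :: "nat \<Rightarrow> fam \<Rightarrow> real"
    and A :: "nat \<Rightarrow> fam set" and V :: "nat \<Rightarrow> nat set"
    and tr :: "nat \<Rightarrow> nat" and Gh :: "nat \<Rightarrow> fam set"
  assumes "1 \<le> k" and "0 < \<delta>" and "\<delta> < 1" and "0 < eps" and "0 < eps1"
    and score_equiv: "\<forall>G\<in>dags d k. \<forall>G'\<in>dags d k. markov_equiv d G G' \<longrightarrow> score H G = score H G'"
    and init: "A 1 = {}" "V 1 = {}" "tr 1 = 1"
    and iter: "\<forall>j\<in>{1..J}. is_iteration d k (Hh (tr j))
                 (real (d - card (V j)) * eps_round eps1 (tr j))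
                 (A j) (V j) (Gh j) (A (Suc j)) (V (Suc j))"
    and rounds: "\<forall>j\<in>{1..<J}. tr (Suc j) = (if A (Suc j) = A j then Suc (tr j) else tr j)"
    and guard: "\<forall>j\<in>{1..J}. round_start tr j \<longrightarrow>
                  card (V j) < d \<and> eps / real (d - card (V j)) < eps_round eps1 (tr j)"
    and event: "\<forall>j\<in>{1..J}. round_start tr j \<and> tr j \<in> {1..T_rounds d eps eps1} \<longrightarrow>
                  (\<forall>f\<in>F_act d k (V j). \<bar>Hh (tr j) f - H f\<bar> \<le> eps_round eps1 (tr j) / 2)"
  shows "\<forall>j\<in>{1..J}. G_star d k H \<inter> G_j d k (A j) \<noteq> {}"
proof -
  have tr_pos: "1 \<le> tr j" if "1 \<le> j" "j \<le> J" for j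
    using that
    by (induction j rule: nat_induct_at_least) (use init rounds in \<open>auto split: if_splits\<close>)
  have accurate: "\<forall>f\<in>F_act d k (V j). \<bar>Hh (tr j) f - H f\<bar> \<le> eps_round eps1 (tr j) / 2"
    if "j \<in> {1..J}" for j
    using that
  proof (induction j rule: round_induct[where tr = tr])
    case (new_round j)
    then show ?case
      using guard event tr_pos round_le_T_rounds[OF \<open>0 < eps\<close> \<open>0 < eps1\<close>] by auto
  next
    case (same_round j)
    then have "F_act d k (V (Suc j)) \<subseteq> F_act d k (V j)"
      using iter is_iteration_mono unfolding F_act_def by fastforce
    then show ?case
      using same_round by auto
  qed
  have eps_round_nonneg: "0 \<le> eps_round eps1 t" for t
    unfolding eps_round_def using \<open>0 < eps1\<close> by simp
  show ?thesis
    using run_keeps_optimal[where Hh = "\<lambda>j. Hh (tr j)" and e = "\<lambda>j. eps_round eps1 (tr j)",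
        OF score_equiv init(1,2) iter accurate eps_round_nonneg] by blast
qed

end
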